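(* Let $\mathcal{X}=({\bm X},m^{\bm X}_\bullet,\nu^{\bm X})$ and $\mathcal{Y}=({\bm Y},m^{\bm Y}_\bullet,\nu^{\bm Y})$ be stationary finite Markov chains and $C:{\bm X}\times{\bm Y}\to\mathbb{R}_+$ a cost function. Then for every probability distribution $p$ on $\mathbb{N}$, $d^{p}_{\mathrm{OTM}}(\mathcal{X},\mathcal{Y};C)\le d_{\mathrm{OTC}}(\mathcal{X},\mathcal{Y};C)$.
   Context: A finite Markov chain $\mathcal{X}=({\bm X},m^{\bm X}_\bullet,\nu^{\bm X})$ consists of a finite set ${\bm X}$, a transition kernel $m^{\bm X}_\bullet:{\bm X}\to\mathcal{P}({\bm X})$ and an initial distribution $\nu^{\bm X}$; it is stationary if $\nu^{\bm X}$ is a stationary distribution of $m^{\bm X}_\bullet$. $\mathcal{C}(\alpha,\beta)$ denotes the set of couplings of $\alpha,\beta$. A Markovian coupling between $\mathcal{X}$ and $\mathcal{Y}$ is a (possibly time-inhomogeneous) Markov chain $(X_t,Y_t)_{t\in\mathbb{N}}$ on ${\bm X}\times{\bm Y}$ with $\mathrm{law}(X_0,Y_0)\in\mathcal{C}(\nu^{\bm X},\nu^{\bm Y})$ and, for all $t,x,y$, the conditional law of $(X_{t+1},Y_{t+1})$ given $(X_t,Y_t)=(x,y)$ in $\mathcal{C}(m^{\bm X}_x,m^{\bm Y}_y)$; it is time homogeneous if these conditional laws do not depend on $t$. For $p\in\mathcal{P}(\mathbb{N})$ and $T\sim p$, $d^{p}_{\mathrm{OTM}}(\mathcal{X},\mathcal{Y};C)=\inf\mathbb{E}\,C(X_T,Y_T)$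 over all Markovian couplings independent of $T$. The optimal transition coupling distance is $d_{\mathrm{OTC}}(\mathcal{X},\mathcal{Y};C)=\inf\mathbb{E}\,C(X_0,Y_0)$, the infimum over all time homogeneous Markovian couplings whose initial distribution $\mathrm{law}(X_0,Y_0)$ is stationary for the coupled chain. *)

theory Defs
  imports "HOL-Probability.Probability"
begin

text \<open>A finite Markov chain is given by a finite state type, a kernel m and an
initial distribution nu. It is stationary if nu is stationary for m.\<close>

definition stationary :: "'a pmf \<Rightarrow> ('a \<Rightarrow> 'a pmf) \<Rightarrow> bool" where
  "stationary nu m \<longleftrightarrow> bind_pmf nu m = nu"

definition couplings :: "'a pmf \<Rightarrow> 'b pmf \<Rightarrow> ('a \<times> 'b) pmf set" where
  "couplings \<alpha> \<beta> = {\<pi>. map_pmf fst \<pi> = \<alpha> \<and> map_pmf snd \<pi> = \<beta>}"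

fun chain_law :: "'s pmf \<Rightarrow> (nat \<Rightarrow> 's \<Rightarrow> 's pmf) \<Rightarrow> nat \<Rightarrow> 's pmf" where
  "chain_law pi0 K 0 = pi0"
| "chain_law pi0 K (Suc t) = bind_pmf (chain_law pi0 K t) (K t)"

definition markovian_coupling ::
  "('x \<Rightarrow> 'x pmf) \<Rightarrow> 'x pmf \<Rightarrow> ('y \<Rightarrow> 'y pmf) \<Rightarrow> 'y pmf
     \<Rightarrow> ('x \<times> 'y) pmf \<Rightarrow> (nat \<Rightarrow> 'x \<times> 'y \<Rightarrow> ('x \<times> 'y) pmf) \<Rightarrow> bool" where
  "markovian_coupling mX nuX mY nuY pi0 K \<longleftrightarrow>
     pi0 \<in> couplings nuX nuY \<and>
     (\<forall>t x y. K t (x, y) \<in> couplings (mX x) (mY y))"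

text \<open>d_OTM^p: infimum over Markovian couplings (independent of T ~ p) of E C(X_T,Y_T).\<close>
definition d_OTM ::
  "nat pmf \<Rightarrow> ('x \<Rightarrow> 'x pmf) \<Rightarrow> 'x pmf \<Rightarrow> ('y \<Rightarrow> 'y pmf) \<Rightarrow> 'y pmf
     \<Rightarrow> ('x \<times> 'y \<Rightarrow> real) \<Rightarrow> real" where
  "d_OTM p mX nuX mY nuY C = Inf
     {measure_pmf.expectation p (\<lambda>t. measure_pmf.expectation (chain_law pi0 K t) C)
      | pi0 K. markovian_coupling mX nuX mY nuY pi0 K}"

definition d_OTC ::
  "('x \<Rightarrow> 'x pmf) \<Rightarrow> 'x pmf \<Rightarrow> ('y \<Rightarrow> 'y pmf) \<Rightarrow> 'y pmf
     \<Rightarrow> ('x \<times> 'y \<Rightarrow> real) \<Rightarrow> real" where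
  "d_OTC mX nuX mY nuY C = Inf
     {measure_pmf.expectation pi0 C
      | pi0 K. markovian_coupling mX nuX mY nuY pi0 (\<lambda>_. K) \<and> stationary pi0 K}"

end

theory Submission
  imports Defs
begin

text \<open>A time-homogeneous coupling started in a stationary law stays in that law, so its
cost at the random time T is the cost at time 0 whatever the law of T: every value in the
infimum defining d_OTC also occurs in the infimum defining d_OTM. For the comparison of
infima, the independent coupling of the two stationary chains shows that the d_OTC set is
nonempty, and nonnegativity of the cost bounds the d_OTM set from below.\<close>

lemma chain_law_stationary:
  assumes "stationary pi0 K"
  shows "chain_law pi0 (\<lambda>_. K) t = pi0"
  using assms by (induction t) (auto simp: stationary_def)

lemma stationary_pair_pmf:
  assumes "stationary nuX mX" and "stationary nuY mY"
  shows "stationary (pair_pmf nuX nuY) (\<lambda>(x, y). pair_pmf (mX x) (mY y))"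
proof -
  have "bind_pmf (pair_pmf nuX nuY) (\<lambda>(x, y). pair_pmf (mX x) (mY y))
      = pair_pmf (bind_pmf nuX mX) (bind_pmf nuY mY)"
    unfolding pair_pmf_def
    by (simp add: bind_assoc_pmf bind_return_pmf split_beta)
       (subst bind_commute_pmf, simp add: bind_assoc_pmf bind_return_pmf)
  with assms show ?thesis
    by (simp add: stationary_def)
qed

lemma markovian_coupling_pair_pmf:
  "markovian_coupling mX nuX mY nuY (pair_pmf nuX nuY) (\<lambda>_ (x, y). pair_pmf (mX x) (mY y))"
  by (simp add: markovian_coupling_def couplings_def map_fst_pair_pmf map_snd_pair_pmf)

theorem proposition7:
  fixes mX :: "'x::finite \<Rightarrow> 'x pmf" and nuX :: "'x pmf"
    and mY :: "'y::finite \<Rightarrow> 'y pmf" and nuY :: "'y pmf"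
    and C :: "'x \<times> 'y \<Rightarrow> real" and p :: "nat pmf"
  assumes "stationary nuX mX" and "stationary nuY mY"
    and "\<And>x y. C (x, y) \<ge> 0"
  shows "d_OTM p mX nuX mY nuY C \<le> d_OTC mX nuX mY nuY C"
proof -
  let ?OTM = "{measure_pmf.expectation p (\<lambda>t. measure_pmf.expectation (chain_law pi0 K t) C)
      | pi0 K. markovian_coupling mX nuX mY nuY pi0 K}"
  let ?OTC = "{measure_pmf.expectation pi0 C
      | pi0 K. markovian_coupling mX nuX mY nuY pi0 (\<lambda>_. K) \<and> stationary pi0 K}"
  have "?OTC \<noteq> {}"
    using markovian_coupling_pair_pmf stationary_pair_pmf[OF assms(1,2)] by blast
  moreover have "bdd_below ?OTM"
  proof (rule bdd_belowI[of _ 0])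
    have "C z \<ge> 0" for z
      using assms(3) by (cases z) simp
    then show "0 \<le> v" if "v \<in> ?OTM" for v
      using that by (auto intro!: Bochner_Integration.integral_nonneg)
  qed
  moreover have "?OTC \<subseteq> ?OTM"
    by (force simp: chain_law_stationary)
  ultimately show ?thesis
    unfolding d_OTM_def d_OTC_def by (rule cInf_superset_mono)
qed

end
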